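(* For every simple graph $G$, $\alpha(G)\leq\vartheta^*(G)\leq\vartheta'(G)$.
   Context: Let $G=(V,E)$, $V=\{1,\dots,n\}$, have adjacency matrix $A=[a_{ij}]$ and degrees $d_j$; $\alpha(G)$ is its independence number. For $x\in\mathbb{R}^n$ and symmetric $W=[w_{ij}]\in\mathbb{R}^{n\times n}$ let $L(x,W)=\begin{bmatrix}1&x^\top\\ x&W\end{bmatrix}$ and $\mathrm{diag}(W)=(w_{11},\dots,w_{nn})$. Define $\mathrm{TH}'(G)=\{x\mid \exists$ symmetric $W$ with $\mathrm{diag}(W)=x$, $L(x,W)\succeq 0$, $w_{ij}=0$ for all $\{i,j\}\in E$, and $W\geq 0$ entrywise$\}$ and $\vartheta'(G)=\max\{\mathbf{e}^\top x\mid x\in\mathrm{TH}'(G)\}$. Let $P^*$ be the set of pairs $(x,W)$, $W$ symmetric with $\mathrm{diag}(W)=x$, satisfying for all $i,j\in V$: $w_{ij}\geq 0$; $x_i\geq w_{ij}$; $w_{ij}+1\geq x_i+x_j$; $w_{ij}-x_i+\sum_{k\in V}a_{jk}w_{ik}\geq 0$; $x_j+x_i-w_{ij}-1+\sum_{k\in V}a_{jk}(x_k-w_{ik})\geq 0$; $(d_j+1)(x_i-w_{ij})-\sum_{k\in V}a_{jk}w_{ik}\geq 0$; $(d_j+1)(1+w_{ij}-x_j-x_i)+\sum_{k\in V}a_{jk}(w_{ik}-x_k)\geq 0$. (These are the linearizations, with $x_ix_j\mapsto w_{ij}$, $x_i^2\mapsto x_i$, of products of the constraints $0\le x\le \mathbf{e}$,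 $(A+I)x-\mathbf{e}\ge 0$, $(D-I)(\mathbf{e}-x)-((A+I)x-\mathbf{e})\ge 0$ with $x_i$ and $1-x_i$, $D$ the degree diagonal matrix.) Define $\mathrm{TH}^*(G)=\{x\mid\exists$ symmetric $W$ with $\mathrm{diag}(W)=x$, $L(x,W)\succeq 0$, $(x,W)\in P^*\}$ and $\vartheta^*(G)=\max\{\mathbf{e}^\top x\mid x\in\mathrm{TH}^*(G)\}$. *)

theory Defs
  imports Complex_Main
begin

definition simple_graph :: "('n::finite \<Rightarrow> 'n \<Rightarrow> bool) \<Rightarrow> bool" where
  "simple_graph E \<longleftrightarrow> (\<forall>i j. E i j \<longleftrightarrow> E j i) \<and> (\<forall>i. \<not> E i i)"

definition adj :: "('n::finite \<Rightarrow> 'n \<Rightarrow> bool) \<Rightarrow> 'n \<Rightarrow> 'n \<Rightarrow> real" where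
  "adj E i j = (if E i j then 1 else 0)"

definition deg :: "('n::finite \<Rightarrow> 'n \<Rightarrow> bool) \<Rightarrow> 'n \<Rightarrow> real" where
  "deg E j = real (card {k. E j k})"

definition independent_set :: "('n::finite \<Rightarrow> 'n \<Rightarrow> bool) \<Rightarrow> 'n set \<Rightarrow> bool" where
  "independent_set E S \<longleftrightarrow> (\<forall>i\<in>S. \<forall>j\<in>S. \<not> E i j)"

definition independence_number :: "('n::finite \<Rightarrow> 'n \<Rightarrow> bool) \<Rightarrow> nat" where
  "independence_number E = Max {card S | S. independent_set E S}"

definition sym_mat :: "('a::finite \<Rightarrow> 'a \<Rightarrow> real) \<Rightarrow> bool" where
  "sym_mat M \<longleftrightarrow> (\<forall>i j. M i j = M j i)"

definition psd :: "('a::finite \<Rightarrow> 'a \<Rightarrow> real) \<Rightarrow> bool" where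
  "psd M \<longleftrightarrow> sym_mat M \<and> (\<forall>v. (\<Sum>i\<in>UNIV. \<Sum>j\<in>UNIV. v i * M i j * v j) \<ge> 0)"

text \<open>The bordered matrix L(x,W) = [[1, x^T],[x, W]], indexed by None (the extra row/column) and Some i.\<close>
definition Lmat :: "('n::finite \<Rightarrow> real) \<Rightarrow> ('n \<Rightarrow> 'n \<Rightarrow> real) \<Rightarrow> 'n option \<Rightarrow> 'n option \<Rightarrow> real" where
  "Lmat x W p q = (case (p, q) of
      (None, None) \<Rightarrow> 1
    | (None, Some j) \<Rightarrow> x j
    | (Some i, None) \<Rightarrow> x i
    | (Some i, Some j) \<Rightarrow> W i j)"

definition TH' :: "('n::finite \<Rightarrow> 'n \<Rightarrow> bool) \<Rightarrow> ('n \<Rightarrow> real) set" where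
  "TH' E = {x. \<exists>W. sym_mat W \<and> (\<forall>i. W i i = x i) \<and> psd (Lmat x W)
              \<and> (\<forall>i j. E i j \<longrightarrow> W i j = 0) \<and> (\<forall>i j. W i j \<ge> 0)}"

definition theta' :: "('n::finite \<Rightarrow> 'n \<Rightarrow> bool) \<Rightarrow> real" where
  "theta' E = Sup {(\<Sum>i\<in>UNIV. x i) | x. x \<in> TH' E}"

definition Pstar :: "('n::finite \<Rightarrow> 'n \<Rightarrow> bool) \<Rightarrow> ('n \<Rightarrow> real) \<Rightarrow> ('n \<Rightarrow> 'n \<Rightarrow> real) \<Rightarrow> bool" where
  "Pstar E x W \<longleftrightarrow> sym_mat W \<and> (\<forall>i. W i i = x i) \<and>
    (\<forall>i j.
       W i j \<ge> 0
     \<and> x i \<ge> W i j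
     \<and> W i j + 1 \<ge> x i + x j
     \<and> W i j - x i + (\<Sum>k\<in>UNIV. adj E j k * W i k) \<ge> 0
     \<and> x j + x i - W i j - 1 + (\<Sum>k\<in>UNIV. adj E j k * (x k - W i k)) \<ge> 0
     \<and> (deg E j + 1) * (x i - W i j) - (\<Sum>k\<in>UNIV. adj E j k * W i k) \<ge> 0
     \<and> (deg E j + 1) * (1 + W i j - x j - x i) + (\<Sum>k\<in>UNIV. adj E j k * (W i k - x k)) \<ge> 0)"

definition THstar :: "('n::finite \<Rightarrow> 'n \<Rightarrow> bool) \<Rightarrow> ('n \<Rightarrow> real) set" where
  "THstar E = {x. \<exists>W. sym_mat W \<and> (\<forall>i. W i i = x i) \<and> psd (Lmat x W) \<and> Pstar E x W}"

definition theta_star :: "('n::finite \<Rightarrow> 'n \<Rightarrow> bool) \<Rightarrow> real" where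
  "theta_star E = Sup {(\<Sum>i\<in>UNIV. x i) | x. x \<in> THstar E}"

end

theory Submission
  imports Defs "HOL-Library.Indicator_Function"
begin

text \<open>
  For the lower bound, take a maximum independent set S. Being maximal, S dominates every
  vertex outside it, and this is exactly what makes its 0/1 indicator x, together with the
  rank-one lifting w_ij = x_i x_j, satisfy the product constraints defining P*; so the indicator
  lies in TH*(G) and has weight alpha(G).
  For the upper bound, the constraint (d_i + 1)(x_i - w_ii) \<ge> \<Sum>_k a_ik w_ik taken at j = i
  forces w_ik = 0 on every edge, since w \<ge> 0 and w_ii = x_i; hence TH*(G) \<subseteq> TH'(G).
  Both suprema are over sets bounded by n, because the 2 \<times> 2 principal minors of L(x,W)
  give 0 \<le> x_i \<le> 1.
\<close>

lemma psd_outer_product: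
  fixes y :: "'a::finite \<Rightarrow> real"
  shows "psd (\<lambda>p q. y p * y q)"
proof -
  have "(\<Sum>i\<in>UNIV. \<Sum>j\<in>UNIV. v i * (y i * y j) * v j) = (\<Sum>i\<in>UNIV. v i * y i)\<^sup>2" for v
    by (simp add: power2_eq_square sum_product algebra_simps)
  then show ?thesis
    unfolding psd_def sym_mat_def by (simp add: mult.commute)
qed

lemma psd_two_point_form:
  fixes M :: "'a::finite \<Rightarrow> 'a \<Rightarrow> real"
  assumes "psd M" and "p \<noteq> q"
  shows "0 \<le> a * a * M p p + a * b * (M p q + M q p) + b * b * M q q"
proof -
  define v where "v r = (if r = p then a else 0) + (if r = q then b else 0)" for r
  have weigh: "(\<Sum>j\<in>UNIV. v j * f j) = a * f p + b * f q" for f :: "'a \<Rightarrow> real"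
    using assms(2)
    by (simp add: v_def distrib_right sum.distrib if_distrib[of "\<lambda>x. x * _"] cong: if_cong)
  have row: "(\<Sum>j\<in>UNIV. v i * M i j * v j) = v i * (a * M i p + b * M i q)" for i
    using weigh[of "M i"] by (simp add: mult.assoc mult.commute[of "M i _"] flip: sum_distrib_left)
  have "0 \<le> (\<Sum>i\<in>UNIV. \<Sum>j\<in>UNIV. v i * M i j * v j)"
    using assms(1) unfolding psd_def by blast
  also have "\<dots> = a * (a * M p p + b * M p q) + b * (a * M q p + b * M q q)"
    unfolding row weigh ..
  also have "\<dots> = a * a * M p p + a * b * (M p q + M q p) + b * b * M q q"
    by (simp add: algebra_simps)
  finally show ?thesis .
qed

lemma Lmat_diag_bounds:
  assumes "psd (Lmat x W)" and "W i i = x i"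
  shows "0 \<le> x i \<and> x i \<le> 1"
proof -
  \<comment> \<open>the principal minor of L(x,W) on the rows None and Some i, tested against (-x_i, 1)\<close>
  have "0 \<le> x i * x i - x i * (x i + x i) + x i"
    using psd_two_point_form[OF assms(1), of None "Some i" "- x i" 1] assms(2)
    by (simp add: Lmat_def)
  then have "0 \<le> x i * (1 - x i)"
    by (simp add: algebra_simps)
  then show ?thesis
    by (auto simp: zero_le_mult_iff)
qed

lemma sum_le_card_if_mem_TH':
  fixes x :: "'n::finite \<Rightarrow> real"
  assumes "x \<in> TH' E"
  shows "(\<Sum>i\<in>UNIV. x i) \<le> real (card (UNIV :: 'n set))"
proof -
  obtain W where "\<forall>i. W i i = x i" and "psd (Lmat x W)"
    using assms unfolding TH'_def by blast
  then have "x i \<le> 1" for i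
    using Lmat_diag_bounds by blast
  then have "(\<Sum>i\<in>UNIV. x i) \<le> (\<Sum>i\<in>(UNIV::'n set). 1)"
    by (intro sum_mono)
  then show ?thesis
    by simp
qed

lemma Pstar_edge_zero:
  assumes P: "Pstar E x W" and "E i j"
  shows "W i j = 0"
proof -
  have nonneg: "0 \<le> adj E i k * W i k" for k
    using P by (simp add: Pstar_def adj_def)
  have "(deg E i + 1) * (x i - W i i) - (\<Sum>k\<in>UNIV. adj E i k * W i k) \<ge> 0"
    and "W i i = x i"
    using P unfolding Pstar_def by blast+
  then have "(\<Sum>k\<in>UNIV. adj E i k * W i k) \<le> 0"
    by simp
  then have "(\<Sum>k\<in>UNIV. adj E i k * W i k) = 0"
    using nonneg by (simp add: antisym sum_nonneg)
  then have "adj E i j * W i j = 0"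
    using nonneg by (simp add: sum_nonneg_eq_0_iff)
  then show ?thesis
    using \<open>E i j\<close> by (simp add: adj_def)
qed

lemma THstar_subset_TH': "THstar E \<subseteq> TH' E"
proof
  fix x
  assume "x \<in> THstar E"
  then obtain W where "sym_mat W" "\<forall>i. W i i = x i" "psd (Lmat x W)" "Pstar E x W"
    unfolding THstar_def by blast
  moreover from \<open>Pstar E x W\<close> have "\<forall>i j. W i j \<ge> 0"
    unfolding Pstar_def by blast
  ultimately show "x \<in> TH' E"
    unfolding TH'_def using Pstar_edge_zero by blast
qed

lemma finite_independent_set_cards:
  fixes E :: "'n::finite \<Rightarrow> 'n \<Rightarrow> bool"
  shows "finite {card S | S. independent_set E S}"
  by (rule finite_subset[of _ "{..card (UNIV :: 'n set)}"]) (auto intro: card_mono)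

lemma card_le_independence_number:
  assumes "independent_set E S"
  shows "card S \<le> independence_number E"
  unfolding independence_number_def using assms finite_independent_set_cards by (auto intro: Max_ge)

lemma independence_number_attained:
  "\<exists>S. independent_set E S \<and> card S = independence_number E"
proof -
  have "{card S | S. independent_set E S} \<noteq> {}"
    using independent_set_def by fastforce
  then have "independence_number E \<in> {card S | S. independent_set E S}"
    unfolding independence_number_def using finite_independent_set_cards by (rule Max_in[rotated])
  then show ?thesis
    by auto
qed

lemma maximum_independent_set_dominating:
  assumes "simple_graph E" and "independent_set E S" and "card S = independence_number E"
    and "j \<notin> S"
  shows "\<exists>k\<in>S. E j k"
proof (rule ccontr)
  assume "\<not> (\<exists>k\<in>S. E j k)"
  with assms(1,2) have "independent_set E (insert j S)"
    unfolding independent_set_def simple_graph_def by blast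
  then have "card (insert j S) \<le> card S"
    unfolding assms(3) by (rule card_le_independence_number)
  with \<open>j \<notin> S\<close> show False
    by simp
qed

lemma psd_Lmat_outer: "psd (Lmat x (\<lambda>i j. x i * x j))"
proof -
  define y where "y p = (case p of None \<Rightarrow> 1 | Some i \<Rightarrow> x i)" for p
  have "Lmat x (\<lambda>i j. x i * x j) = (\<lambda>p q. y p * y q)"
    by (auto simp: fun_eq_iff Lmat_def y_def split: option.splits)
  then show ?thesis
    using psd_outer_product by metis
qed

lemma indicator_neighbour_sum:
  fixes E :: "'n::finite \<Rightarrow> 'n \<Rightarrow> bool"
  assumes "independent_set E S" and dom: "\<And>j. j \<notin> S \<Longrightarrow> \<exists>k\<in>S. E j k"
  shows "j \<in> S \<Longrightarrow> (\<Sum>k\<in>UNIV. adj E j k * indicator S k) = 0"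
    and "j \<notin> S \<Longrightarrow> 1 \<le> (\<Sum>k\<in>UNIV. adj E j k * indicator S k)"
    and "(\<Sum>k\<in>UNIV. adj E j k * indicator S k) \<le> deg E j"
proof -
  show "(\<Sum>k\<in>UNIV. adj E j k * indicator S k) = 0" if "j \<in> S"
    using assms(1) that by (intro sum.neutral) (auto simp: independent_set_def adj_def indicator_def)
  show "1 \<le> (\<Sum>k\<in>UNIV. adj E j k * indicator S k)" if out: "j \<notin> S"
  proof -
    obtain k where "k \<in> S" "E j k"
      using dom[OF out] by blast
    moreover have "adj E j k * indicator S k \<le> (\<Sum>k\<in>UNIV. adj E j k * indicator S k)"
      by (rule member_le_sum) (auto simp: adj_def)
    ultimately show ?thesis
      by (simp add: adj_def)
  qed
  have "(\<Sum>k\<in>UNIV. adj E j k * indicator S k) \<le> (\<Sum>k\<in>UNIV. adj E j k)"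
    by (rule sum_mono) (simp add: adj_def indicator_def)
  also have "\<dots> = deg E j"
    unfolding adj_def deg_def by (simp add: sum.If_cases)
  finally show "(\<Sum>k\<in>UNIV. adj E j k * indicator S k) \<le> deg E j" .
qed

lemma Pstar_indicator_outer:
  fixes E :: "'n::finite \<Rightarrow> 'n \<Rightarrow> bool"
  assumes "independent_set E S" and "\<And>j. j \<notin> S \<Longrightarrow> \<exists>k\<in>S. E j k"
  shows "Pstar E (indicator S) (\<lambda>i j. indicator S i * indicator S j)"
proof -
  define x :: "'n \<Rightarrow> real" where "x = indicator S"
  define W where "W i j = x i * x j" for i j
  define N where "N j = (\<Sum>k\<in>UNIV. adj E j k * x k)" for j
  have N_in: "j \<in> S \<Longrightarrow> N j = 0"
    and N_out: "j \<notin> S \<Longrightarrow> 1 \<le> N j"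
    and N_deg: "N j \<le> deg E j" for j
    unfolding N_def x_def using indicator_neighbour_sum[OF assms] by blast+
  have sum_W: "(\<Sum>k\<in>UNIV. adj E j k * W i k) = x i * N j" for i j
    by (simp add: N_def W_def sum_distrib_left algebra_simps)
  have sum_x_W: "(\<Sum>k\<in>UNIV. adj E j k * (x k - W i k)) = (1 - x i) * N j" for i j
    using sum_W[of j i] by (simp add: N_def right_diff_distrib sum_subtractf left_diff_distrib)
  have sum_W_x: "(\<Sum>k\<in>UNIV. adj E j k * (W i k - x k)) = - ((1 - x i) * N j)" for i j
    using sum_W[of j i] by (simp add: N_def right_diff_distrib sum_subtractf left_diff_distrib)
  have "Pstar E x W"
    unfolding Pstar_def sum_W sum_x_W sum_W_x
  proof (intro conjI allI)
    show "sym_mat W"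
      unfolding sym_mat_def W_def by simp
    show "W i i = x i" for i
      by (simp add: W_def x_def indicator_def)
    fix i j
    show "W i j \<ge> 0" "x i \<ge> W i j" "W i j + 1 \<ge> x i + x j"
      by (simp_all add: W_def x_def indicator_def)
    show "W i j - x i + x i * N j \<ge> 0"
      and "x j + x i - W i j - 1 + (1 - x i) * N j \<ge> 0"
      and "(deg E j + 1) * (x i - W i j) - x i * N j \<ge> 0"
      and "(deg E j + 1) * (1 + W i j - x j - x i) + - ((1 - x i) * N j) \<ge> 0"
      using N_in[of j] N_out[of j] N_deg[of j]
      by (cases "i \<in> S"; cases "j \<in> S"; simp add: W_def x_def indicator_def)+
  qed
  then show ?thesis
    by (simp add: x_def W_def[abs_def])
qed

lemma indicator_mem_THstar:
  fixes E :: "'n::finite \<Rightarrow> 'n \<Rightarrow> bool"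
  assumes "independent_set E S" and "\<And>j. j \<notin> S \<Longrightarrow> \<exists>k\<in>S. E j k"
  shows "indicator S \<in> THstar E"
  unfolding THstar_def
proof (intro CollectI exI[of _ "\<lambda>i j. indicator S i * indicator S j"] conjI allI)
  show "sym_mat (\<lambda>i j. indicator S i * indicator S j :: real)"
    by (simp add: sym_mat_def)
  show "indicator S i * indicator S i = (indicator S i :: real)" for i
    by (simp add: indicator_def)
  show "psd (Lmat (indicator S) (\<lambda>i j. indicator S i * indicator S j))"
    by (rule psd_Lmat_outer)
  show "Pstar E (indicator S) (\<lambda>i j. indicator S i * indicator S j)"
    by (rule Pstar_indicator_outer[OF assms])
qed

theorem theorem5:
  fixes E :: "'n::finite \<Rightarrow> 'n \<Rightarrow> bool"
  assumes "simple_graph E"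
  shows "real (independence_number E) \<le> theta_star E \<and> theta_star E \<le> theta' E"
proof -
  let ?val = "\<lambda>T. {(\<Sum>i\<in>UNIV. x i) | x. x \<in> T}"
  have bdd_TH': "bdd_above (?val (TH' E))"
    using sum_le_card_if_mem_TH' by (intro bdd_aboveI) blast
  have bdd_THstar: "bdd_above (?val (THstar E))"
    by (rule bdd_above_mono[OF bdd_TH']) (use THstar_subset_TH'[of E] in blast)
  obtain S where S: "independent_set E S" "card S = independence_number E"
    using independence_number_attained by blast
  have "indicator S \<in> THstar E"
    using indicator_mem_THstar S maximum_independent_set_dominating[OF assms S] by blast
  moreover have "(\<Sum>i\<in>UNIV. indicator S i) = real (independence_number E)"
    using sum_mult_indicator[of UNIV "\<lambda>_. 1 :: real" S] S(2) by simp
  ultimately have "real (independence_number E) \<in> ?val (THstar E)"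
    by force
  then have "real (independence_number E) \<le> theta_star E"
    unfolding theta_star_def using bdd_THstar by (rule cSup_upper)
  moreover from \<open>indicator S \<in> THstar E\<close> have "theta_star E \<le> theta' E"
    unfolding theta_star_def theta'_def using bdd_TH' THstar_subset_TH'
    by (intro cSup_subset_mono) blast+
  ultimately show ?thesis ..
qed

end
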